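(* For every partial symmetric Boolean function $f:\{0,1\}^N\to\{0,1,\ast\}$, we have $\operatorname{R}(f)=O(\operatorname{Q}(f)^2)$, with an absolute implied constant.
   Context: A partial Boolean function $f:\{0,1\}^N\to\{0,1,\ast\}$ is defined on $S=\{X:f(X)\ne\ast\}$; it is symmetric if $f(X)$ depends only on the Hamming weight $|X|=x_1+\dots+x_N$. $\operatorname{R}(f)$ is the bounded-error randomized query complexity (expected number of queries of an optimal randomized algorithm that outputs $f(X)$ with probability $\ge2/3$ for every $X\in S$), and $\operatorname{Q}(f)$ is the bounded-error quantum query complexity (minimum number of queries of a quantum algorithm outputting $f(X)$ with probability $\ge2/3$ for every $X\in S$). *)

theory Defs
  imports "HOL-Probability.Probability"
begin

(* Inputs X \<in> {0,1}^N are bool lists of length N (True = 1).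
   A partial Boolean function is f :: bool list \<Rightarrow> bool option, None playing the role of *.
   Only its values on lists of length N matter. *)

definition hamming_weight :: "bool list \<Rightarrow> nat" where
  "hamming_weight X = length (filter id X)"

definition dom_pf :: "nat \<Rightarrow> (bool list \<Rightarrow> bool option) \<Rightarrow> bool list set" where
  "dom_pf N f = {X. length X = N \<and> f X \<noteq> None}"

definition symmetric_pf :: "nat \<Rightarrow> (bool list \<Rightarrow> bool option) \<Rightarrow> bool" where
  "symmetric_pf N f \<longleftrightarrow>
     (\<forall>X Y. length X = N \<longrightarrow> length Y = N \<longrightarrow> hamming_weight X = hamming_weight Y \<longrightarrow> f X = f Y)"

(* deterministic decision tree: Query i l r queries x_i, goes to l if x_i = 0, to r if x_i = 1 *)
datatype dtree = Leaf bool | Query nat dtree dtree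

fun valid_tree :: "nat \<Rightarrow> dtree \<Rightarrow> bool" where
  "valid_tree N (Leaf b) = True"
| "valid_tree N (Query i l r) = (i < N \<and> valid_tree N l \<and> valid_tree N r)"

fun eval_tree :: "dtree \<Rightarrow> bool list \<Rightarrow> bool" where
  "eval_tree (Leaf b) X = b"
| "eval_tree (Query i l r) X = (if X ! i then eval_tree r X else eval_tree l X)"

fun nqueries :: "dtree \<Rightarrow> bool list \<Rightarrow> nat" where
  "nqueries (Leaf b) X = 0"
| "nqueries (Query i l r) X = Suc (if X ! i then nqueries r X else nqueries l X)"

(* a randomized algorithm = probability distribution over decision trees *)
definition rand_alg_correct :: "nat \<Rightarrow> (bool list \<Rightarrow> bool option) \<Rightarrow> dtree pmf \<Rightarrow> bool" where
  "rand_alg_correct N f P \<longleftrightarrow>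
     (\<forall>t \<in> set_pmf P. valid_tree N t) \<and>
     (\<forall>X \<in> dom_pf N f. measure_pmf.prob P {t. eval_tree t X = the (f X)} \<ge> 2/3)"

definition rand_alg_cost :: "nat \<Rightarrow> (bool list \<Rightarrow> bool option) \<Rightarrow> dtree pmf \<Rightarrow> ennreal" where
  "rand_alg_cost N f P = (SUP X \<in> dom_pf N f. \<integral>\<^sup>+ t. ennreal (real (nqueries t X)) \<partial>(measure_pmf P))"

definition R_cplx :: "nat \<Rightarrow> (bool list \<Rightarrow> bool option) \<Rightarrow> ennreal" where
  "R_cplx N f = (INF P \<in> {P. rand_alg_correct N f P}. rand_alg_cost N f P)"

(* computational basis states |i, b, w>: query index i < N, target bit b, workspace w < W *)
type_synonym qbasis = "nat \<times> bool \<times> nat"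

definition qspace :: "nat \<Rightarrow> nat \<Rightarrow> qbasis set" where
  "qspace N W = {0..<N} \<times> (UNIV :: bool set) \<times> {0..<W}"

(* an operator given by its matrix entries U r s (r,s basis states), restricted to B *)
definition unitary_on :: "qbasis set \<Rightarrow> (qbasis \<Rightarrow> qbasis \<Rightarrow> complex) \<Rightarrow> bool" where
  "unitary_on B U \<longleftrightarrow>
     (\<forall>s\<in>B. \<forall>t\<in>B. (\<Sum>r\<in>B. cnj (U r s) * U r t) = (if s = t then 1 else 0))"

definition apply_op :: "qbasis set \<Rightarrow> (qbasis \<Rightarrow> qbasis \<Rightarrow> complex) \<Rightarrow> (qbasis \<Rightarrow> complex) \<Rightarrow> (qbasis \<Rightarrow> complex)" where
  "apply_op B U v = (\<lambda>r. \<Sum>s\<in>B. U r s * v s)"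

(* standard oracle O_X |i,b,w> = |i, b XOR x_i, w> *)
definition oracle_apply :: "bool list \<Rightarrow> (qbasis \<Rightarrow> complex) \<Rightarrow> (qbasis \<Rightarrow> complex)" where
  "oracle_apply X v = (\<lambda>(i, b, w). v (i, b \<noteq> X ! i, w))"

definition init_state :: "qbasis \<Rightarrow> complex" where
  "init_state s = (if s = (0, False, 0) then 1 else 0)"

(* state after U_k O_X U_{k-1} ... O_X U_0 |0> *)
fun qstate :: "qbasis set \<Rightarrow> (nat \<Rightarrow> qbasis \<Rightarrow> qbasis \<Rightarrow> complex) \<Rightarrow> bool list \<Rightarrow> nat \<Rightarrow> (qbasis \<Rightarrow> complex)" where
  "qstate B Us X 0 = apply_op B (Us 0) init_state"
| "qstate B Us X (Suc k) = apply_op B (Us (Suc k)) (oracle_apply X (qstate B Us X k))"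

(* probability that a final measurement in the computational basis lands in Acc (output 1) *)
definition acc_prob :: "qbasis set \<Rightarrow> (qbasis \<Rightarrow> complex) \<Rightarrow> real" where
  "acc_prob Acc v = (\<Sum>s\<in>Acc. (cmod (v s))^2)"

definition quantum_computes :: "nat \<Rightarrow> (bool list \<Rightarrow> bool option) \<Rightarrow> nat \<Rightarrow> bool" where
  "quantum_computes N f T \<longleftrightarrow>
     (\<exists>W Us Acc. W \<ge> 1 \<and> (\<forall>k\<le>T. unitary_on (qspace N W) (Us k)) \<and> Acc \<subseteq> qspace N W \<and>
        (\<forall>X \<in> dom_pf N f.
           (if the (f X) then acc_prob Acc (qstate (qspace N W) Us X T) \<ge> 2/3
            else acc_prob Acc (qstate (qspace N W) Us X T) \<le> 1/3)))"

definition Q_cplx :: "nat \<Rightarrow> (bool list \<Rightarrow> bool option) \<Rightarrow> ennreal" where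
  "Q_cplx N f = (INF T \<in> {T. quantum_computes N f T}. ennreal (real T))"

end

theory Submission
  imports Defs
begin

text \<open>A symmetric partial function is determined by the sets of Hamming weights on which it
  is \<open>1\<close> and \<open>0\<close>. The randomized algorithm samples \<open>K\<close> positions uniformly with
  replacement and outputs the value of the weight nearest to the estimate
  \<open>N \<cdot> (number of ones) / K\<close>; by Chebyshev's inequality it errs with probability at most
  \<open>1/3\<close> on an input of weight \<open>w\<close> once \<open>K \<ge> 12 w (N - w) / d\<^sup>2\<close>, where \<open>d\<close> is the
  distance from \<open>w\<close> to the nearest weight carrying the other value. Conversely, Ambainis'
  adversary method applied to the inclusion relation between inputs of weights \<open>a < b\<close>
  shows that a quantum algorithm distinguishing them needs
  \<open>\<Omega>(\<surd>((N - a) b) / (b - a))\<close> queries. As \<open>w (N - w) \<le> (N - min w w') max w w'\<close>,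
  the sample size for the worst pair of weights is \<open>O(Q\<^sup>2)\<close>.\<close>

section \<open>Inner products and unitary evolution\<close>

definition inner_on :: "'a set \<Rightarrow> ('a \<Rightarrow> complex) \<Rightarrow> ('a \<Rightarrow> complex) \<Rightarrow> complex" where
  "inner_on B u v = (\<Sum>s\<in>B. cnj (u s) * v s)"

lemma inner_on_commute: "inner_on B v u = cnj (inner_on B u v)"
  unfolding inner_on_def by (simp add: mult.commute)

lemma inner_on_self: "inner_on B u u = of_real (acc_prob B u)"
  unfolding inner_on_def acc_prob_def of_real_sum
  by (rule sum.cong[OF refl]) (simp only: complex_norm_square mult.commute)

lemma inner_on_apply_op:
  assumes "finite B" "unitary_on B U"
  shows "inner_on B (apply_op B U u) (apply_op B U v) = inner_on B u v"
proof -
  have "inner_on B (apply_op B U u) (apply_op B U v) =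
     (\<Sum>r\<in>B. \<Sum>s\<in>B. \<Sum>t\<in>B. cnj (u s) * v t * (cnj (U r s) * U r t))"
    by (simp add: inner_on_def apply_op_def sum_distrib_left sum_distrib_right mult_ac)
  also have "\<dots> = (\<Sum>s\<in>B. \<Sum>t\<in>B. \<Sum>r\<in>B. cnj (u s) * v t * (cnj (U r s) * U r t))"
    by (subst sum.swap) (rule sum.cong[OF refl], rule sum.swap)
  also have "\<dots> = (\<Sum>s\<in>B. \<Sum>t\<in>B. cnj (u s) * v t * (\<Sum>r\<in>B. cnj (U r s) * U r t))"
    by (simp add: sum_distrib_left)
  also have "\<dots> = (\<Sum>s\<in>B. \<Sum>t\<in>B. cnj (u s) * v t * (if s = t then 1 else 0))"
    using assms(2) unfolding unitary_on_def by (intro sum.cong refl) auto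
  also have "\<dots> = inner_on B u v"
    using assms(1) by (simp add: inner_on_def if_distrib cong: if_cong)
  finally show ?thesis .
qed

lemma two_cmod_cnj_mult_le:
  fixes z1 z2 :: complex and a :: real
  assumes "a > 0"
  shows "2 * cmod (cnj z1 * z2) \<le> a * (cmod z1)^2 + (cmod z2)^2 / a"
proof -
  have "0 \<le> (a * cmod z1 - cmod z2)^2" by simp
  hence "a * (2 * cmod z1 * cmod z2) \<le> a * (a * (cmod z1)^2 + (cmod z2)^2 / a)"
    using assms by (simp add: power2_eq_square algebra_simps)
  thus ?thesis using assms by (simp add: norm_mult mult_le_cancel_left)
qed

text \<open>Apply the weighted AM-GM inequality with weight \<open>2/3\<close> on the accepting
  states and \<open>3/2\<close> on the rejecting ones.\<close>

lemma cmod_inner_on_le_if_separated: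
  assumes "finite B" "Acc \<subseteq> B" "acc_prob B u = 1" "acc_prob B v = 1"
    and "acc_prob Acc u \<ge> 2/3" "acc_prob Acc v \<le> 1/3"
  shows "cmod (inner_on B u v) \<le> 17/18"
proof -
  define p q where pq_def: "p = acc_prob Acc u" "q = acc_prob Acc v"
  have rej_u: "(\<Sum>s\<in>B - Acc. (cmod (u s))^2) = 1 - p" and rej_v: "(\<Sum>s\<in>B - Acc. (cmod (v s))^2) = 1 - q"
    using assms(3,4) unfolding pq_def acc_prob_def by (simp_all add: sum_diff[OF assms(1,2)])
  have "inner_on B u v = (\<Sum>s\<in>Acc. cnj (u s) * v s) + (\<Sum>s\<in>B - Acc. cnj (u s) * v s)"
    unfolding inner_on_def using sum.subset_diff[OF assms(2,1)] by (simp add: add.commute)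
  hence "2 * cmod (inner_on B u v) \<le> (\<Sum>s\<in>Acc. 2 * cmod (cnj (u s) * v s)) + (\<Sum>s\<in>B - Acc. 2 * cmod (cnj (u s) * v s))"
    by (metis (no_types) norm_triangle_mono norm_sum sum_distrib_left mult_left_mono
        distrib_left zero_le_numeral)
  also have "\<dots> \<le> (\<Sum>s\<in>Acc. 2/3 * (cmod (u s))^2 + (cmod (v s))^2 / (2/3))
       + (\<Sum>s\<in>B - Acc. 3/2 * (cmod (u s))^2 + (cmod (v s))^2 / (3/2))"
    by (intro add_mono sum_mono two_cmod_cnj_mult_le) auto
  also have "\<dots> = 2/3 * p + 3/2 * q
      + 3/2 * (\<Sum>s\<in>B - Acc. (cmod (u s))^2) + 2/3 * (\<Sum>s\<in>B - Acc. (cmod (v s))^2)"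
    by (simp add: pq_def acc_prob_def sum.distrib sum_divide_distrib[symmetric] sum_distrib_left[symmetric] sum_distrib_right[symmetric] mult.commute)
  also have "\<dots> = 2/3 * p + 3/2 * q + 3/2 * (1 - p) + 2/3 * (1 - q)"
    unfolding rej_u rej_v ..
  also have "\<dots> \<le> 17/9" using assms(5,6) unfolding pq_def by (simp add: field_simps)
  finally show ?thesis by simp
qed

section \<open>Query algorithms\<close>

lemma sum_qspace:
  "(\<Sum>s\<in>qspace N W. h s) = (\<Sum>i<N. \<Sum>w<W. h (i,False,w) + h (i,True,w))"
proof -
  have "(\<Sum>s\<in>qspace N W. h s) = (\<Sum>(i,bw)\<in>{0..<N} \<times> (UNIV \<times> {0..<W}). h (i,bw))"
    by (simp add: qspace_def)
  also have "\<dots> = (\<Sum>i\<in>{0..<N}. \<Sum>bw\<in>UNIV \<times> {0..<W}. h (i,bw))"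
    by (rule sum.cartesian_product[symmetric])
  also have "\<dots> = (\<Sum>i\<in>{0..<N}. \<Sum>b\<in>UNIV. \<Sum>w\<in>{0..<W}. h (i,b,w))"
    by (intro sum.cong refl) (simp add: sum.cartesian_product)
  finally show ?thesis by (simp add: UNIV_bool sum.distrib lessThan_atLeast0)
qed

text \<open>The query magnitude of \<open>u\<close> at \<open>i\<close>: the probability of querying \<open>x\<^sub>i\<close> in state \<open>u\<close>.\<close>

definition query_mass :: "nat \<Rightarrow> nat \<Rightarrow> (qbasis \<Rightarrow> complex) \<Rightarrow> real" where
  "query_mass W i u = (\<Sum>w<W. (cmod (u (i,False,w)))^2 + (cmod (u (i,True,w)))^2)"

lemma query_mass_nonneg: "query_mass W i u \<ge> 0"
  unfolding query_mass_def by (intro sum_nonneg) auto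

lemma acc_prob_qspace: "acc_prob (qspace N W) u = (\<Sum>i<N. query_mass W i u)"
  unfolding acc_prob_def sum_qspace query_mass_def by (simp add: sum.distrib)

lemma inner_on_oracle_apply:
  "inner_on (qspace N W) (oracle_apply X u) (oracle_apply X v) = inner_on (qspace N W) u v"
  unfolding inner_on_def sum_qspace
proof (intro sum.cong refl, goal_cases)
  case (1 i w)
  show ?case by (cases "X!i") (simp_all add: oracle_apply_def)
qed

lemma cmod_inner_on_oracle_apply_diff_le:
  assumes a: "a > 0"
  shows "cmod (inner_on (qspace N W) (oracle_apply X u) (oracle_apply Y v) - inner_on (qspace N W) u v)
     \<le> (\<Sum>i\<in>{i\<in>{..<N}. X!i \<noteq> Y!i}. a * query_mass W i u + query_mass W i v / a)"
proof -
  define D where "D i = (\<Sum>w<W. (cnj (oracle_apply X u (i,False,w)) * oracle_apply Y v (i,False,w)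
      + cnj (oracle_apply X u (i,True,w)) * oracle_apply Y v (i,True,w))
      - (cnj (u (i,False,w)) * v (i,False,w) + cnj (u (i,True,w)) * v (i,True,w)))" for i
  have D_eq_0: "D i = 0" if "X!i = Y!i" for i
    using that unfolding D_def by (cases "Y!i") (auto simp: oracle_apply_def)
  have D_le: "cmod (D i) \<le> a * query_mass W i u + query_mass W i v / a" if "X!i \<noteq> Y!i" for i
  proof -
    have norm4: "cmod (z1 + z2 - (z3 + z4)) \<le> cmod z1 + cmod z2 + cmod z3 + cmod z4" for z1 z2 z3 z4 :: complex
      by (smt (verit) norm_triangle_ineq norm_triangle_ineq4)
    have "cmod (D i) \<le> (\<Sum>w<W. cmod (cnj (oracle_apply X u (i,False,w)) * oracle_apply Y v (i,False,w))
      + cmod (cnj (oracle_apply X u (i,True,w)) * oracle_apply Y v (i,True,w))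
      + cmod (cnj (u (i,False,w)) * v (i,False,w)) + cmod (cnj (u (i,True,w)) * v (i,True,w)))"
      unfolding D_def by (rule order_trans[OF norm_sum sum_mono], rule norm4)
    also have "\<dots> \<le> (\<Sum>w<W. a * ((cmod (u (i,False,w)))^2 + (cmod (u (i,True,w)))^2)
        + ((cmod (v (i,False,w)))^2 + (cmod (v (i,True,w)))^2) / a)"
    proof (rule sum_mono)
      fix w
      note amgm = two_cmod_cnj_mult_le[OF a]
      show "cmod (cnj (oracle_apply X u (i,False,w)) * oracle_apply Y v (i,False,w))
          + cmod (cnj (oracle_apply X u (i,True,w)) * oracle_apply Y v (i,True,w))
          + cmod (cnj (u (i,False,w)) * v (i,False,w)) + cmod (cnj (u (i,True,w)) * v (i,True,w))
         \<le> a * ((cmod (u (i,False,w)))^2 + (cmod (u (i,True,w)))^2)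
          + ((cmod (v (i,False,w)))^2 + (cmod (v (i,True,w)))^2) / a"
        using that amgm[of "u (i,False,w)" "v (i,False,w)"] amgm[of "u (i,True,w)" "v (i,True,w)"]
          amgm[of "u (i,False,w)" "v (i,True,w)"] amgm[of "u (i,True,w)" "v (i,False,w)"]
        by (cases "X!i"; cases "Y!i"; simp add: oracle_apply_def distrib_left add_divide_distrib; linarith)
    qed
    also have "\<dots> = a * query_mass W i u + query_mass W i v / a"
      by (simp add: query_mass_def sum.distrib sum_distrib_left[symmetric] sum_divide_distrib[symmetric])
    finally show ?thesis .
  qed
  have "inner_on (qspace N W) (oracle_apply X u) (oracle_apply Y v) - inner_on (qspace N W) u v = (\<Sum>i<N. D i)"
    unfolding inner_on_def sum_qspace D_def by (simp add: sum_subtractf)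
  also have "\<dots> = (\<Sum>i\<in>{i\<in>{..<N}. X!i \<noteq> Y!i}. D i)"
    by (rule sum.mono_neutral_right) (auto simp: D_eq_0)
  finally show ?thesis
    by (auto intro!: order_trans[OF norm_sum] sum_mono D_le)
qed

locale query_algorithm =
  fixes N W :: nat and Us :: "nat \<Rightarrow> qbasis \<Rightarrow> qbasis \<Rightarrow> complex" and T :: nat
  assumes unitary: "\<forall>k\<le>T. unitary_on (qspace N W) (Us k)"
    and N_pos: "N \<ge> 1" and W_pos: "W \<ge> 1"
begin

abbreviation state :: "bool list \<Rightarrow> nat \<Rightarrow> qbasis \<Rightarrow> complex" where
  "state X k \<equiv> qstate (qspace N W) Us X k"

lemma inner_on_state_0: "inner_on (qspace N W) (state X 0) (state Y 0) = 1"
proof -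
  have "(0, False, 0) \<in> qspace N W" using N_pos W_pos by (auto simp: qspace_def)
  hence "inner_on (qspace N W) init_state init_state = 1"
    unfolding inner_on_def init_state_def by (simp add: if_distrib qspace_def cong: if_cong)
  thus ?thesis using inner_on_apply_op[of "qspace N W" "Us 0"] unitary by (simp add: qspace_def)
qed

lemma inner_on_state_Suc:
  assumes "Suc k \<le> T"
  shows "inner_on (qspace N W) (state X (Suc k)) (state Y (Suc k))
       = inner_on (qspace N W) (oracle_apply X (state X k)) (oracle_apply Y (state Y k))"
  using inner_on_apply_op[of "qspace N W" "Us (Suc k)"] unitary assms by (simp add: qspace_def)

lemma acc_prob_state: "k \<le> T \<Longrightarrow> acc_prob (qspace N W) (state X k) = 1"
proof (induction k)
  case 0
  show ?case using inner_on_state_0[of X X] by (simp add: inner_on_self)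
next
  case (Suc k)
  have "complex_of_real (acc_prob (qspace N W) (state X (Suc k)))
      = inner_on (qspace N W) (oracle_apply X (state X k)) (oracle_apply X (state X k))"
    unfolding inner_on_self[symmetric] by (rule inner_on_state_Suc[OF Suc.prems])
  also have "\<dots> = complex_of_real (acc_prob (qspace N W) (state X k))"
    unfolding inner_on_oracle_apply by (rule inner_on_self)
  finally show ?case using Suc by simp
qed

lemma sum_query_mass_state: "k \<le> T \<Longrightarrow> (\<Sum>i<N. query_mass W i (state X k)) = 1"
  using acc_prob_state by (simp add: acc_prob_qspace)

lemma cmod_inner_on_state_Suc_ge:
  assumes "Suc k \<le> T" "a > 0"
  shows "cmod (inner_on (qspace N W) (state X (Suc k)) (state Y (Suc k)))
    \<ge> cmod (inner_on (qspace N W) (state X k) (state Y k))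
      - (a * (\<Sum>i\<in>{i\<in>{..<N}. X!i \<noteq> Y!i}. query_mass W i (state X k))
         + (\<Sum>i\<in>{i\<in>{..<N}. X!i \<noteq> Y!i}. query_mass W i (state Y k)) / a)"
  using cmod_inner_on_oracle_apply_diff_le[OF assms(2), of N W X "state X k" Y "state Y k"]
    norm_triangle_ineq2[of "inner_on (qspace N W) (state X k) (state Y k)"
      "inner_on (qspace N W) (state X (Suc k)) (state Y (Suc k))"]
  unfolding inner_on_state_Suc[OF assms(1)]
  by (simp add: norm_minus_commute sum.distrib sum_distrib_left sum_divide_distrib)

end

section \<open>The adversary bound\<close>

lemma sum_related_mass_le:
  fixes g :: "'a \<Rightarrow> nat \<Rightarrow> real"
  assumes "finite B"
    and g_nonneg: "\<And>x i. g x i \<ge> 0" and g_sum: "\<And>x. x \<in> A \<Longrightarrow> (\<Sum>i<N. g x i) = 1"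
    and l: "\<And>x i. x \<in> A \<Longrightarrow> i < N \<Longrightarrow> card {y\<in>B. rel x y \<and> d x y i} \<le> l"
  shows "(\<Sum>x\<in>A. \<Sum>y\<in>B. of_bool (rel x y) * (\<Sum>i\<in>{i\<in>{..<N}. d x y i}. g x i)) \<le> l * card A"
proof -
  have "(\<Sum>y\<in>B. of_bool (rel x y) * (\<Sum>i\<in>{i\<in>{..<N}. d x y i}. g x i)) \<le> l" if x: "x \<in> A" for x
  proof -
    have "(\<Sum>y\<in>B. of_bool (rel x y) * (\<Sum>i\<in>{i\<in>{..<N}. d x y i}. g x i))
        = (\<Sum>y\<in>B. \<Sum>i<N. of_bool (rel x y \<and> d x y i) * g x i)"
      by (intro sum.cong refl) (simp add: sum.inter_filter Int_def conj_commute)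
    also have "\<dots> = (\<Sum>i<N. g x i * card {y\<in>B. rel x y \<and> d x y i})"
      using \<open>finite B\<close> by (subst sum.swap) (simp add: sum_distrib_right[symmetric] mult.commute Int_def)
    also have "\<dots> \<le> (\<Sum>i<N. g x i * l)"
      using x l by (intro sum_mono mult_left_mono g_nonneg) auto
    also have "\<dots> = l" using g_sum[OF x] by (simp add: sum_distrib_right[symmetric])
    finally show ?thesis .
  qed
  hence "(\<Sum>x\<in>A. \<Sum>y\<in>B. of_bool (rel x y) * (\<Sum>i\<in>{i\<in>{..<N}. d x y i}. g x i)) \<le> (\<Sum>x\<in>A. real l)"
    by (rule sum_mono)
  thus ?thesis by (simp add: mult.commute)
qed

lemma sq_le_of_forall_le_mult_plus_div:
  fixes c p q :: real
  assumes "c > 0" "p \<ge> 0" "q \<ge> 0" and le: "\<And>\<alpha>. \<alpha> > 0 \<Longrightarrow> c \<le> \<alpha> * p + q / \<alpha>"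
  shows "c^2 \<le> 4 * p * q"
proof (cases "p > 0 \<and> q > 0")
  case True
  define \<alpha> where "\<alpha> = sqrt q / sqrt p"
  have "\<alpha> * p = sqrt (p * q)" "q / \<alpha> = sqrt (p * q)"
    using True unfolding \<alpha>_def by (simp_all add: real_sqrt_mult field_simps)
  hence "c \<le> 2 * sqrt (p * q)" using le[of \<alpha>] True unfolding \<alpha>_def by simp
  hence "c^2 \<le> (2 * sqrt (p * q))^2" using assms(1) by (intro power_mono) auto
  thus ?thesis using True by (simp add: power_mult_distrib)
next
  case False
  \<comment> \<open>then a suitable \<open>\<alpha>\<close> makes \<open>\<alpha> * p + q / \<alpha>\<close> smaller than \<open>c\<close>\<close>
  then consider "p = 0" | "q = 0" using assms(2,3) by linarith
  hence False
  proof cases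
    case 1
    have "c \<le> q / (2 * (q + 1) / c)" using le[of "2 * (q + 1) / c"] 1 assms(1,3) by simp
    also have "\<dots> < c" using assms(1,3) by (simp add: field_simps add_nonneg_pos)
    finally show False by simp
  next
    case 2
    have "c \<le> c / (2 * (p + 1)) * p" using le[of "c / (2 * (p + 1))"] 2 assms(1,2) by simp
    also have "\<dots> < c" using assms(1,2) by (simp add: field_simps add_nonneg_pos)
    finally show False by simp
  qed
  thus ?thesis ..
qed

context query_algorithm
begin

text \<open>The progress measure is the total overlap of the
  states of related inputs after \<open>k\<close> queries: it starts at the number of related pairs, one
  query decreases it by at most \<open>\<alpha> l |A| + l' |B| / \<alpha>\<close> for every \<open>\<alpha> > 0\<close>, and at the end
  it must be at most \<open>\<delta>\<close> times its initial value.\<close>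

definition overlap :: "('a \<Rightarrow> bool list) \<Rightarrow> ('a \<Rightarrow> 'a \<Rightarrow> bool) \<Rightarrow> 'a set \<Rightarrow> 'a set \<Rightarrow> nat \<Rightarrow> real" where
  "overlap inp rel A B k = (\<Sum>x\<in>A. \<Sum>y\<in>B. of_bool (rel x y) *
     cmod (inner_on (qspace N W) (state (inp x) k) (state (inp y) k)))"

lemma overlap_0: "overlap inp rel A B 0 = (\<Sum>x\<in>A. \<Sum>y\<in>B. of_bool (rel x y))"
  unfolding overlap_def inner_on_state_0 by simp

lemma overlap_Suc_ge:
  fixes \<alpha> :: real
  assumes "finite A" "finite B" "Suc k \<le> T" "\<alpha> > 0"
    and l: "\<And>x i. x \<in> A \<Longrightarrow> i < N \<Longrightarrow> card {y\<in>B. rel x y \<and> inp x ! i \<noteq> inp y ! i} \<le> l"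
    and l': "\<And>y i. y \<in> B \<Longrightarrow> i < N \<Longrightarrow> card {x\<in>A. rel x y \<and> inp x ! i \<noteq> inp y ! i} \<le> l'"
  shows "overlap inp rel A B k - (\<alpha> * (l * card A) + l' * card B / \<alpha>) \<le> overlap inp rel A B (Suc k)"
proof -
  define D where "D x y = {i\<in>{..<N}. inp x ! i \<noteq> inp y ! i}" for x y
  define E E' where "E = (\<Sum>x\<in>A. \<Sum>y\<in>B. of_bool (rel x y) * (\<Sum>i\<in>D x y. query_mass W i (state (inp x) k)))"
    and "E' = (\<Sum>x\<in>A. \<Sum>y\<in>B. of_bool (rel x y) * (\<Sum>i\<in>D x y. query_mass W i (state (inp y) k)))"
  have "E \<le> l * card A"
    unfolding E_def D_def using \<open>finite B\<close> query_mass_nonneg sum_query_mass_state assms(3) l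
    by (intro sum_related_mass_le) auto
  moreover have "E' \<le> l' * card B"
    unfolding E'_def D_def
    using sum_related_mass_le[where A = B and B = A and rel = "\<lambda>y x. rel x y"
        and d = "\<lambda>y x i. inp x ! i \<noteq> inp y ! i" and g = "\<lambda>y i. query_mass W i (state (inp y) k)"]
      \<open>finite A\<close> query_mass_nonneg sum_query_mass_state assms(3) l'
    by (subst sum.swap) auto
  moreover have "overlap inp rel A B k - (\<alpha> * E + E' / \<alpha>) = (\<Sum>x\<in>A. \<Sum>y\<in>B. of_bool (rel x y) *
      (cmod (inner_on (qspace N W) (state (inp x) k) (state (inp y) k))
       - (\<alpha> * (\<Sum>i\<in>D x y. query_mass W i (state (inp x) k))
          + (\<Sum>i\<in>D x y. query_mass W i (state (inp y) k)) / \<alpha>)))"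
    unfolding overlap_def E_def E'_def
    by (simp add: sum_subtractf sum.distrib sum_distrib_left sum_divide_distrib algebra_simps)
  moreover have "\<dots> \<le> overlap inp rel A B (Suc k)"
    unfolding overlap_def D_def
    by (intro sum_mono mult_left_mono cmod_inner_on_state_Suc_ge) (simp_all add: assms(3,4))
  ultimately show ?thesis
    using \<open>\<alpha> > 0\<close> by (smt (verit) divide_right_mono mult_left_mono)
qed

lemma overlap_ge:
  fixes \<alpha> :: real
  assumes "finite A" "finite B" "k \<le> T" "\<alpha> > 0"
    and l: "\<And>x i. x \<in> A \<Longrightarrow> i < N \<Longrightarrow> card {y\<in>B. rel x y \<and> inp x ! i \<noteq> inp y ! i} \<le> l"
    and l': "\<And>y i. y \<in> B \<Longrightarrow> i < N \<Longrightarrow> card {x\<in>A. rel x y \<and> inp x ! i \<noteq> inp y ! i} \<le> l'"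
  shows "(\<Sum>x\<in>A. \<Sum>y\<in>B. of_bool (rel x y)) - k * (\<alpha> * (l * card A) + l' * card B / \<alpha>)
    \<le> overlap inp rel A B k"
  using assms(3)
proof (induction k)
  case 0
  show ?case by (simp add: overlap_0)
next
  case (Suc k)
  thus ?case
    using overlap_Suc_ge[OF assms(1,2) Suc.prems assms(4) l l'] unfolding of_nat_Suc distrib_right by simp
qed

theorem adversary_bound:
  fixes inp :: "'a \<Rightarrow> bool list" and rel :: "'a \<Rightarrow> 'a \<Rightarrow> bool" and A B :: "'a set" and \<delta> :: real
  assumes "finite A" "finite B" "A \<noteq> {}" "m > 0" "m' > 0" "\<delta> < 1"
    and m: "\<And>x. x \<in> A \<Longrightarrow> card {y\<in>B. rel x y} \<ge> m"
    and m': "\<And>y. y \<in> B \<Longrightarrow> card {x\<in>A. rel x y} \<ge> m'"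
    and l: "\<And>x i. x \<in> A \<Longrightarrow> i < N \<Longrightarrow> card {y\<in>B. rel x y \<and> inp x ! i \<noteq> inp y ! i} \<le> l"
    and l': "\<And>y i. y \<in> B \<Longrightarrow> i < N \<Longrightarrow> card {x\<in>A. rel x y \<and> inp x ! i \<noteq> inp y ! i} \<le> l'"
    and separated: "\<And>x y. x \<in> A \<Longrightarrow> y \<in> B \<Longrightarrow> rel x y \<Longrightarrow>
      cmod (inner_on (qspace N W) (state (inp x) T) (state (inp y) T)) \<le> \<delta>"
  shows "(1 - \<delta>)^2 * m * m' \<le> 4 * T^2 * l * l'"
proof -
  define R where "R = (\<Sum>x\<in>A. \<Sum>y\<in>B. of_bool (rel x y) :: real)"
  have "real (m * card A) = (\<Sum>x\<in>A. real m)" by simp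
  also have "\<dots> \<le> (\<Sum>x\<in>A. real (card {y\<in>B. rel x y}))" using m by (intro sum_mono) simp
  finally have R_ge_A: "m * card A \<le> R" using \<open>finite B\<close> by (simp add: R_def Int_def)
  have "real (m' * card B) = (\<Sum>y\<in>B. real m')" by simp
  also have "\<dots> \<le> (\<Sum>y\<in>B. real (card {x\<in>A. rel x y}))" using m' by (intro sum_mono) simp
  finally have R_ge_B: "m' * card B \<le> R"
    using \<open>finite A\<close> unfolding R_def by (subst sum.swap) (simp add: Int_def)
  have "R > 0"
    using R_ge_A \<open>m > 0\<close> \<open>finite A\<close> \<open>A \<noteq> {}\<close> by (smt (verit) card_gt_0_iff of_nat_0_less_iff mult_pos_pos)
  have final: "overlap inp rel A B T \<le> \<delta> * R"
    unfolding overlap_def R_def sum_distrib_left by (intro sum_mono) (simp add: separated)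
  have "1 - \<delta> \<le> \<alpha> * (T * l / m) + (T * l' / m') / \<alpha>" if "\<alpha> > 0" for \<alpha>
  proof -
    have "(1 - \<delta>) * R \<le> T * (\<alpha> * (l * card A) + l' * card B / \<alpha>)"
      using overlap_ge[OF assms(1,2) order.refl that l l'] final unfolding R_def by (simp add: algebra_simps)
    also have "\<dots> \<le> T * (\<alpha> * (l * (R / m)) + l' * (R / m') / \<alpha>)"
    proof -
      have "card A \<le> R / m" "card B \<le> R / m'"
        using R_ge_A R_ge_B \<open>m > 0\<close> \<open>m' > 0\<close> by (simp_all add: field_simps)
      hence "l * card A \<le> l * (R / m)" "l' * card B \<le> l' * (R / m')"
        using mult_left_mono[of "real (card A)" "R / m" "real l"]
          mult_left_mono[of "real (card B)" "R / m'" "real l'"] by simp_all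
      thus ?thesis using that by (intro mult_left_mono add_mono divide_right_mono) simp_all
    qed
    also have "\<dots> = (\<alpha> * (T * l / m) + (T * l' / m') / \<alpha>) * R" by (simp add: field_simps)
    finally show ?thesis using \<open>R > 0\<close> by simp
  qed
  hence "(1 - \<delta>)^2 \<le> 4 * (T * l / m) * (T * l' / m')"
    using \<open>\<delta> < 1\<close> by (intro sq_le_of_forall_le_mult_plus_div) auto
  thus ?thesis using \<open>m > 0\<close> \<open>m' > 0\<close> by (simp add: field_simps power2_eq_square)
qed

end

section \<open>The quantum lower bound for symmetric functions\<close>

definition bits_of_set :: "nat \<Rightarrow> nat set \<Rightarrow> bool list" where
  "bits_of_set N S = map (\<lambda>i. i \<in> S) [0..<N]"

lemma length_bits_of_set [simp]: "length (bits_of_set N S) = N"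
  by (simp add: bits_of_set_def)

lemma nth_bits_of_set [simp]: "i < N \<Longrightarrow> bits_of_set N S ! i = (i \<in> S)"
  by (simp add: bits_of_set_def)

lemma hamming_weight_bits_of_set:
  assumes "S \<subseteq> {..<N}"
  shows "hamming_weight (bits_of_set N S) = card S"
proof -
  have "hamming_weight (bits_of_set N S) = length (filter (\<lambda>i. i \<in> S) [0..<N])"
    by (simp add: hamming_weight_def bits_of_set_def filter_map o_def)
  also have "\<dots> = card (set (filter (\<lambda>i. i \<in> S) [0..<N]))"
    by (rule distinct_card[symmetric]) simp
  also have "set (filter (\<lambda>i. i \<in> S) [0..<N]) = S" using assms by auto
  finally show ?thesis .
qed

lemma card_supersets_of_card:
  assumes "finite U" "S \<subseteq> U" "card S \<le> k"
  shows "card {T. T \<subseteq> U \<and> card T = k \<and> S \<subseteq> T} = (card U - card S) choose (k - card S)"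
proof -
  have fS: "finite S" using assms(1,2) finite_subset by blast
  have "bij_betw (\<lambda>V. V \<union> S) {V. V \<subseteq> U - S \<and> card V = k - card S} {T. T \<subseteq> U \<and> card T = k \<and> S \<subseteq> T}"
  proof (rule bij_betw_byWitness[where f'="\<lambda>T. T - S"])
    show "(\<lambda>V. V \<union> S) ` {V. V \<subseteq> U - S \<and> card V = k - card S} \<subseteq> {T. T \<subseteq> U \<and> card T = k \<and> S \<subseteq> T}"
    proof (rule image_subsetI)
      fix V assume V: "V \<in> {V. V \<subseteq> U - S \<and> card V = k - card S}"
      hence "card (V \<union> S) = card V + card S"
        using fS assms(1) by (intro card_Un_disjoint) (auto intro: finite_subset)
      thus "V \<union> S \<in> {T. T \<subseteq> U \<and> card T = k \<and> S \<subseteq> T}" using V assms by auto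
    qed
  qed (use fS in \<open>auto simp: card_Diff_subset\<close>)
  hence "card {T. T \<subseteq> U \<and> card T = k \<and> S \<subseteq> T} = card {V. V \<subseteq> U - S \<and> card V = k - card S}"
    by (simp add: bij_betw_same_card)
  also have "\<dots> = card (U - S) choose (k - card S)" using assms(1) by (intro n_subsets) auto
  finally show ?thesis using fS assms(2) by (simp add: card_Diff_subset)
qed

lemma card_supersets_containing_le:
  assumes "finite U" "S \<subseteq> U" "card S = a" "a < b"
  shows "card {T. T \<subseteq> U \<and> card T = b \<and> S \<subseteq> T \<and> i \<in> T - S} \<le> (card U - a - 1) choose (b - a - 1)"
proof (cases "i \<in> U - S")
  case True
  have "{T. T \<subseteq> U \<and> card T = b \<and> S \<subseteq> T \<and> i \<in> T - S} = {T. T \<subseteq> U \<and> card T = b \<and> insert i S \<subseteq> T}"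
    using True by auto
  moreover have "card (insert i S) = a + 1"
    using True assms(1-3) finite_subset[of S U] by auto
  ultimately show ?thesis
    using True assms card_supersets_of_card[of U "insert i S" b] by simp
next
  case False
  hence empty: "{T. T \<subseteq> U \<and> card T = b \<and> S \<subseteq> T \<and> i \<in> T - S} = {}" by auto
  show ?thesis unfolding empty by simp
qed

lemma card_subsets_missing_le:
  assumes "finite Y"
  shows "card {S. S \<subseteq> Y \<and> card S = a \<and> i \<in> Y - S} \<le> (card Y - 1) choose a"
proof (cases "i \<in> Y")
  case True
  have "{S. S \<subseteq> Y \<and> card S = a \<and> i \<in> Y - S} = {S. S \<subseteq> Y - {i} \<and> card S = a}"
    using True by auto
  thus ?thesis using True assms n_subsets[of "Y - {i}" a] by simp
next
  case False
  hence empty: "{S. S \<subseteq> Y \<and> card S = a \<and> i \<in> Y - S} = {}" by auto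
  show ?thesis unfolding empty by simp
qed

lemma weight_bound_arith:
  fixes c :: real and b d l l' m m' n T :: nat
  assumes "c * m * m' \<le> 4 * T^2 * l * l'" "d * m = n * l" "d * m' = b * l'" "l > 0" "l' > 0"
  shows "c * (n * b) \<le> 4 * T^2 * d^2"
proof -
  have e: "real d * m = real n * l" "real d * m' = real b * l'"
    using arg_cong[where f = real, OF assms(2)] arg_cong[where f = real, OF assms(3)] by simp_all
  have "c * (n * b) * (l * l') = c * (real n * l) * (real b * l')" by (simp add: mult_ac)
  also have "\<dots> = c * m * m' * d^2" unfolding e[symmetric] by (simp add: power2_eq_square mult_ac)
  also have "\<dots> \<le> 4 * T^2 * l * l' * d^2" using assms(1) by (simp add: mult_right_mono)
  finally show ?thesis using assms(4,5) by (simp add: mult.assoc mult_le_cancel_right_pos)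
qed

context query_algorithm
begin

text \<open>Instantiate the adversary bound with the inclusion relation between inputs of weight
  \<open>a\<close> and \<open>b\<close>; the relation counts are
  \<open>m = (N-a choose b-a)\<close>, \<open>l = (N-a-1 choose b-a-1)\<close>, \<open>m' = (b choose a)\<close>, \<open>l' = (b-1 choose a)\<close>.\<close>

theorem weight_adversary_bound:
  fixes \<delta> :: real
  assumes "a < b" "b \<le> N" "\<delta> < 1"
    and separated: "\<And>X Y. length X = N \<Longrightarrow> length Y = N \<Longrightarrow> hamming_weight X = a \<Longrightarrow>
      hamming_weight Y = b \<Longrightarrow> cmod (inner_on (qspace N W) (state X T) (state Y T)) \<le> \<delta>"
  shows "(1 - \<delta>)^2 * ((N - a) * b) \<le> 4 * T^2 * (b - a)^2"
proof -
  define A B where A_B_def: "A = {S. S \<subseteq> {..<N} \<and> card S = a}" "B = {Y. Y \<subseteq> {..<N} \<and> card Y = b}"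
  define m l m' l' where m_l_def: "m = (N - a) choose (b - a)" "l = (N - a - 1) choose (b - a - 1)"
    "m' = b choose a" "l' = (b - 1) choose a"
  have "finite A" "finite B" unfolding A_B_def by (auto intro: finite_subset[of _ "Pow {..<N}"])
  have "{..<a} \<in> A" using assms(1,2) unfolding A_B_def by auto
  have m: "card {Y\<in>B. S \<subseteq> Y} = m" if "S \<in> A" for S
  proof -
    have "{Y\<in>B. S \<subseteq> Y} = {Y. Y \<subseteq> {..<N} \<and> card Y = b \<and> S \<subseteq> Y}" unfolding A_B_def by auto
    thus ?thesis using that assms(1) card_supersets_of_card[of "{..<N}" S b] unfolding A_B_def m_l_def by auto
  qed
  have m': "card {S\<in>A. S \<subseteq> Y} = m'" if "Y \<in> B" for Y
  proof -
    have "{S\<in>A. S \<subseteq> Y} = {S. S \<subseteq> Y \<and> card S = a}" using that unfolding A_B_def by auto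
    thus ?thesis using that n_subsets[of Y a] unfolding A_B_def m_l_def by (auto intro: finite_subset)
  qed
  have l: "card {Y\<in>B. S \<subseteq> Y \<and> bits_of_set N S ! i \<noteq> bits_of_set N Y ! i} \<le> l" if "S \<in> A" "i < N" for S i
  proof -
    have "{Y\<in>B. S \<subseteq> Y \<and> bits_of_set N S ! i \<noteq> bits_of_set N Y ! i}
        = {Y. Y \<subseteq> {..<N} \<and> card Y = b \<and> S \<subseteq> Y \<and> i \<in> Y - S}"
      using that unfolding A_B_def by auto
    thus ?thesis using that assms(1) card_supersets_containing_le[of "{..<N}" S a b i]
      unfolding A_B_def m_l_def by simp
  qed
  have l': "card {S\<in>A. S \<subseteq> Y \<and> bits_of_set N S ! i \<noteq> bits_of_set N Y ! i} \<le> l'" if "Y \<in> B" "i < N" for Y i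
  proof -
    have "{S\<in>A. S \<subseteq> Y \<and> bits_of_set N S ! i \<noteq> bits_of_set N Y ! i} = {S. S \<subseteq> Y \<and> card S = a \<and> i \<in> Y - S}"
      using that unfolding A_B_def by auto
    thus ?thesis using that card_subsets_missing_le[of Y a i] finite_subset[of Y "{..<N}"]
      unfolding A_B_def m_l_def by simp
  qed
  have "(1 - \<delta>)^2 * m * m' \<le> 4 * T^2 * l * l'"
  proof (rule adversary_bound[where inp = "bits_of_set N" and rel = "(\<subseteq>)"])
    show "cmod (inner_on (qspace N W) (state (bits_of_set N S) T) (state (bits_of_set N Y) T)) \<le> \<delta>"
      if "S \<in> A" "Y \<in> B" for S Y
      using that separated unfolding A_B_def by (simp add: hamming_weight_bits_of_set)
  qed (use \<open>finite A\<close> \<open>finite B\<close> \<open>{..<a} \<in> A\<close> assms m m' l l' in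
       \<open>auto simp: m_l_def zero_less_binomial_iff\<close>)
  moreover have "(b - a) * m = (N - a) * l"
    using binomial_absorption[of "b - a - 1" "N - a"] assms(1) unfolding m_l_def by (simp add: Suc_diff_Suc)
  moreover have "(b - a) * m' = b * l'"
    unfolding m_l_def by (rule binomial_absorb_comp)
  moreover have "l > 0" "l' > 0" using assms(1,2) unfolding m_l_def by (simp_all add: zero_less_binomial_iff)
  ultimately show ?thesis by (rule weight_bound_arith)
qed

end

definition weights_of :: "nat \<Rightarrow> (bool list \<Rightarrow> bool option) \<Rightarrow> bool \<Rightarrow> nat set" where
  "weights_of N f v = hamming_weight ` {X. length X = N \<and> f X = Some v}"

lemma symmetric_pf_weights_of:
  assumes "symmetric_pf N f" "length X = N" "hamming_weight X \<in> weights_of N f v"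
  shows "f X = Some v"
proof -
  obtain Y where "length Y = N" "f Y = Some v" "hamming_weight Y = hamming_weight X"
    using assms(3) unfolding weights_of_def by auto
  thus ?thesis using assms(1,2) unfolding symmetric_pf_def by metis
qed

lemma weights_of_le: "w \<in> weights_of N f v \<Longrightarrow> w \<le> N"
  unfolding weights_of_def hamming_weight_def by (auto intro: order_trans[OF length_filter_le])

lemma weights_of_disjoint:
  assumes "symmetric_pf N f" "w \<in> weights_of N f v" "w \<in> weights_of N f v'"
  shows "v = v'"
proof -
  obtain X where "length X = N" "hamming_weight X = w" "f X = Some v"
    using assms(2) unfolding weights_of_def by blast
  thus ?thesis using symmetric_pf_weights_of[OF assms(1)] assms(3) by fastforce
qed

lemma (in query_algorithm) cmod_inner_on_final_state_le:
  assumes "Acc \<subseteq> qspace N W"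
    and computes: "\<forall>X \<in> dom_pf N f. if the (f X) then acc_prob Acc (state X T) \<ge> 2/3
                                     else acc_prob Acc (state X T) \<le> 1/3"
    and "X \<in> dom_pf N f" "Y \<in> dom_pf N f" "f X \<noteq> f Y"
  shows "cmod (inner_on (qspace N W) (state X T) (state Y T)) \<le> 17/18"
proof -
  have separated: "cmod (inner_on (qspace N W) (state X' T) (state Y' T)) \<le> 17/18"
    if "X' \<in> dom_pf N f" "Y' \<in> dom_pf N f" "the (f X')" "\<not> the (f Y')" for X' Y'
    using that computes acc_prob_state[of T] assms(1)
    by (intro cmod_inner_on_le_if_separated) (auto simp: qspace_def)
  have "the (f X) \<noteq> the (f Y)" using assms(3-5) by (auto simp: dom_pf_def)
  thus ?thesis
    using separated[of X Y] separated[of Y X] assms(3,4) by (cases "the (f X)") (auto simp: inner_on_commute[of _ "state X T"])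
qed

text \<open>For weights \<open>a < b\<close> this is \<open>(N - a) b / (b - a)\<^sup>2\<close>, the square of the
  adversary lower bound for distinguishing weight \<open>a\<close> from weight \<open>b\<close>.\<close>

definition gap_ratio :: "nat \<Rightarrow> nat \<Rightarrow> nat \<Rightarrow> real" where
  "gap_ratio N w w' = real ((N - min w w') * max w w') / (real w - real w')^2"

lemma gap_ratio_le_queries:
  assumes "symmetric_pf N f" "quantum_computes N f T"
    and "w \<in> weights_of N f v" "w' \<in> weights_of N f (\<not> v)"
  shows "gap_ratio N w w' \<le> 1296 * T^2"
proof -
  obtain W Us Acc where "W \<ge> 1" and unitary: "\<forall>k\<le>T. unitary_on (qspace N W) (Us k)"
    and "Acc \<subseteq> qspace N W"
    and computes: "\<forall>X \<in> dom_pf N f. if the (f X) then acc_prob Acc (qstate (qspace N W) Us X T) \<ge> 2/3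
                                     else acc_prob Acc (qstate (qspace N W) Us X T) \<le> 1/3"
    using assms(2) unfolding quantum_computes_def by blast
  define a b where "a = min w w'" and "b = max w w'"
  have "w \<noteq> w'" using assms(1,3,4) weights_of_disjoint by blast
  hence "a < b" "b \<le> N" using assms(3,4) weights_of_le unfolding a_def b_def by auto
  interpret query_algorithm N W Us T
    using unitary \<open>W \<ge> 1\<close> \<open>a < b\<close> \<open>b \<le> N\<close> by unfold_locales auto
  have "(1 - 17/18)^2 * real ((N - a) * b) \<le> 4 * T^2 * (b - a)^2"
  proof (rule weight_adversary_bound[OF \<open>a < b\<close> \<open>b \<le> N\<close>])
    fix X Y assume X: "length X = N" "hamming_weight X = a" and Y: "length Y = N" "hamming_weight Y = b"
    have "f X = Some v \<and> f Y = Some (\<not> v) \<or> f X = Some (\<not> v) \<and> f Y = Some v"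
      using X Y assms(3,4) symmetric_pf_weights_of[OF assms(1)] unfolding a_def b_def
      by (cases "w \<le> w'") (auto simp: min_def max_def)
    thus "cmod (inner_on (qspace N W) (state X T) (state Y T)) \<le> 17/18"
      using X(1) Y(1) by (intro cmod_inner_on_final_state_le[OF \<open>Acc \<subseteq> qspace N W\<close> computes])
        (auto simp: dom_pf_def)
  qed simp
  moreover have "(real w - real w')^2 = (b - a)^2"
    unfolding a_def b_def by (cases "w \<le> w'") (auto simp: of_nat_diff power2_commute)
  ultimately show ?thesis
    using \<open>a < b\<close> unfolding gap_ratio_def a_def[symmetric] b_def[symmetric] by (simp add: divide_le_eq field_simps)
qed

section \<open>The randomized upper bound by sampling\<close>

definition index_seqs :: "nat \<Rightarrow> nat \<Rightarrow> nat list set" where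
  "index_seqs N K = {xs. set xs \<subseteq> {..<N} \<and> length xs = K}"

lemma finite_index_seqs: "finite (index_seqs N K)"
  unfolding index_seqs_def by (rule finite_lists_length_eq) simp

lemma card_index_seqs: "card (index_seqs N K) = N ^ K"
  unfolding index_seqs_def using card_lists_length_eq[of "{..<N}" K] by simp

lemma sum_index_seqs_Suc:
  "(\<Sum>xs\<in>index_seqs N (Suc K). h xs) = (\<Sum>i<N. \<Sum>xs\<in>index_seqs N K. h (i # xs))"
proof -
  have "index_seqs N (Suc K) = (\<lambda>(xs, i). i # xs) ` (index_seqs N K \<times> {..<N})"
    unfolding index_seqs_def by (rule lists_length_Suc_eq)
  hence "(\<Sum>xs\<in>index_seqs N (Suc K). h xs) = sum (h \<circ> (\<lambda>(xs, i). i # xs)) (index_seqs N K \<times> {..<N})"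
    by (simp add: sum.reindex[OF inj_split_Cons])
  also have "\<dots> = (\<Sum>(xs, i)\<in>index_seqs N K \<times> {..<N}. h (i # xs))"
    by (rule sum.cong) auto
  also have "\<dots> = (\<Sum>i<N. \<Sum>xs\<in>index_seqs N K. h (i # xs))"
    by (subst sum.cartesian_product[symmetric]) (rule sum.swap)
  finally show ?thesis .
qed

text \<open>The variance of a sum of \<open>K\<close> independent uniform samples of a centred \<open>g\<close>:
  the cross terms vanish because \<open>g\<close> sums to zero.\<close>

lemma sum_index_seqs_sum_list_sq:
  fixes g :: "nat \<Rightarrow> real"
  assumes "(\<Sum>i<N. g i) = 0"
  shows "real N * (\<Sum>xs\<in>index_seqs N K. (\<Sum>i\<leftarrow>xs. g i)^2) = real K * real N ^ K * (\<Sum>i<N. (g i)^2)"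
proof (induction K)
  case 0
  have "index_seqs N 0 = {[]}" unfolding index_seqs_def by auto
  thus ?case by simp
next
  case (Suc K)
  define S where "S xs = (\<Sum>i\<leftarrow>xs. g i)" for xs
  define G where "G = (\<Sum>i<N. (g i)^2)"
  have "(\<Sum>xs\<in>index_seqs N (Suc K). (S xs)^2)
      = (\<Sum>i<N. \<Sum>xs\<in>index_seqs N K. (g i)^2 + 2 * g i * S xs + (S xs)^2)"
    unfolding sum_index_seqs_Suc by (intro sum.cong refl) (simp add: S_def power2_eq_square algebra_simps)
  also have "\<dots> = real N ^ K * G + real N * (\<Sum>xs\<in>index_seqs N K. (S xs)^2)"
    using assms unfolding G_def
    by (simp add: sum.distrib card_index_seqs sum_distrib_left[symmetric] sum_distrib_right[symmetric])
  finally have "real N * (\<Sum>xs\<in>index_seqs N (Suc K). (S xs)^2)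
      = real N * (real N ^ K * G) + real N * (real N * (\<Sum>xs\<in>index_seqs N K. (S xs)^2))"
    by (simp add: distrib_left)
  also have "\<dots> = real N * (real N ^ K * G) + real N * (real K * real N ^ K * G)"
    using Suc.IH unfolding S_def G_def by simp
  also have "\<dots> = real (Suc K) * real N ^ Suc K * G" by (simp add: algebra_simps)
  finally show ?case unfolding S_def G_def .
qed

definition count_ones :: "bool list \<Rightarrow> nat list \<Rightarrow> nat" where
  "count_ones X xs = length (filter (\<lambda>i. X ! i) xs)"

lemma count_ones_eq_sum_list: "real (count_ones X xs) = (\<Sum>i\<leftarrow>xs. of_bool (X ! i))"
  by (induction xs) (simp_all add: count_ones_def)

lemma sum_of_bool_nth_eq_hamming_weight:
  "(\<Sum>i<length X. of_bool (X ! i) :: real) = real (hamming_weight X)"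
proof -
  have "{i. i < length X \<and> X ! i} = {i\<in>{..<length X}. X ! i}" by auto
  thus ?thesis by (simp add: hamming_weight_def length_filter_conv_card Int_def)
qed

lemma sum_index_seqs_count_ones_deviation:
  assumes "length X = N" "N > 0"
  defines "p \<equiv> real (hamming_weight X) / N"
  shows "(\<Sum>xs\<in>index_seqs N K. (real (count_ones X xs) - K * p)^2) = real N ^ K * K * p * (1 - p)"
proof -
  define g where "g i = of_bool (X ! i) - p" for i
  have hw: "(\<Sum>i<N. of_bool (X ! i) :: real) = N * p"
    using sum_of_bool_nth_eq_hamming_weight[of X] assms unfolding p_def by simp
  have "(\<Sum>i<N. g i) = 0" using hw unfolding g_def by (simp add: sum_subtractf)
  moreover have "(\<Sum>i<N. (g i)^2) = N * p * (1 - p)"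
  proof -
    have "(\<Sum>i<N. (g i)^2) = (\<Sum>i<N. of_bool (X ! i) * (1 - 2 * p) + p^2)"
      unfolding g_def by (intro sum.cong refl) (simp add: power2_eq_square algebra_simps)
    also have "\<dots> = N * p * (1 - 2 * p) + N * p^2"
      unfolding sum.distrib sum_distrib_right[symmetric] hw by simp
    finally show ?thesis by (simp add: power2_eq_square algebra_simps)
  qed
  moreover have "real (count_ones X xs) - K * p = (\<Sum>i\<leftarrow>xs. g i)" if "xs \<in> index_seqs N K" for xs
    using that unfolding g_def count_ones_eq_sum_list index_seqs_def
    by (simp add: sum_list_subtractf sum_list_triv)
  ultimately have "real N * (\<Sum>xs\<in>index_seqs N K. (real (count_ones X xs) - K * p)^2)
      = real N * (real N ^ K * K * p * (1 - p))"
    using sum_index_seqs_sum_list_sq[of g N K] by (simp add: mult_ac)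
  thus ?thesis using assms(2) by simp
qed

lemma card_abs_ge_mult_sq_le_sum_sq:
  fixes h :: "'a \<Rightarrow> real" and r :: real
  assumes "finite A" "r > 0"
  shows "card {x\<in>A. r \<le> \<bar>h x\<bar>} * r^2 \<le> (\<Sum>x\<in>A. (h x)^2)"
proof -
  have "card {x\<in>A. r \<le> \<bar>h x\<bar>} * r^2 = (\<Sum>x\<in>{x\<in>A. r \<le> \<bar>h x\<bar>}. r^2)" by simp
  also have "\<dots> \<le> (\<Sum>x\<in>{x\<in>A. r \<le> \<bar>h x\<bar>}. (h x)^2)"
    using assms(2) by (intro sum_mono) (auto simp flip: abs_le_square_iff)
  also have "\<dots> \<le> (\<Sum>x\<in>A. (h x)^2)" using assms(1) by (intro sum_mono2) auto
  finally show ?thesis .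
qed

lemma R_cplx_le_rand_alg_cost: "rand_alg_correct N f P \<Longrightarrow> R_cplx N f \<le> rand_alg_cost N f P"
  unfolding R_cplx_def by (rule INF_lower) simp

lemma R_cplx_eq_0_if_weights_of_empty:
  assumes "weights_of N f (\<not> v) = {}"
  shows "R_cplx N f = 0"
proof -
  have "f X = Some v" if "X \<in> dom_pf N f" for X
    using that assms unfolding dom_pf_def weights_of_def by (cases "f X") auto
  hence "rand_alg_correct N f (return_pmf (Leaf v))"
    by (simp add: rand_alg_correct_def)
  moreover have "rand_alg_cost N f (return_pmf (Leaf v)) = 0"
    unfolding rand_alg_cost_def by (cases "dom_pf N f = {}") (simp_all add: bot_ennreal)
  ultimately show ?thesis using R_cplx_le_rand_alg_cost[of N f] by (metis le_zero_eq)
qed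

text \<open>The argument \<open>c\<close> counts the ones seen so far.\<close>

fun count_tree :: "(nat \<Rightarrow> bool) \<Rightarrow> nat list \<Rightarrow> nat \<Rightarrow> dtree" where
  "count_tree dec [] c = Leaf (dec c)"
| "count_tree dec (i # xs) c = Query i (count_tree dec xs c) (count_tree dec xs (Suc c))"

lemma eval_count_tree: "eval_tree (count_tree dec xs c) X = dec (c + count_ones X xs)"
  by (induction xs arbitrary: c) (auto simp: count_ones_def)

lemma nqueries_count_tree: "nqueries (count_tree dec xs c) X = length xs"
  by (induction xs arbitrary: c) auto

lemma valid_count_tree: "set xs \<subseteq> {..<N} \<Longrightarrow> valid_tree N (count_tree dec xs c)"
  by (induction xs arbitrary: c) auto

definition sampling_alg :: "(nat \<Rightarrow> bool) \<Rightarrow> nat \<Rightarrow> nat \<Rightarrow> dtree pmf" where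
  "sampling_alg dec N K = map_pmf (\<lambda>xs. count_tree dec xs 0) (pmf_of_set (index_seqs N K))"

lemma index_seqs_nonempty: "N > 0 \<Longrightarrow> index_seqs N K \<noteq> {}"
  unfolding index_seqs_def by (auto intro: exI[of _ "replicate K 0"])

lemma rand_alg_cost_sampling_alg:
  assumes "N > 0"
  shows "rand_alg_cost N f (sampling_alg dec N K) \<le> ennreal K"
  unfolding rand_alg_cost_def
proof (rule SUP_least)
  fix X
  have "(\<integral>\<^sup>+ t. ennreal (real (nqueries t X)) \<partial>measure_pmf (sampling_alg dec N K))
      = (\<integral>\<^sup>+ xs. ennreal (real (length xs)) \<partial>measure_pmf (pmf_of_set (index_seqs N K)))"
    by (simp add: sampling_alg_def nqueries_count_tree)
  also have "\<dots> = (\<integral>\<^sup>+ xs. ennreal (real K) \<partial>measure_pmf (pmf_of_set (index_seqs N K)))"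
    using finite_index_seqs index_seqs_nonempty[OF assms]
    by (intro nn_integral_cong_AE) (auto simp: AE_measure_pmf_iff index_seqs_def)
  finally show "(\<integral>\<^sup>+ t. ennreal (real (nqueries t X)) \<partial>measure_pmf (sampling_alg dec N K)) \<le> ennreal K"
    by (simp add: measure_pmf.emeasure_space_1)
qed

lemma rand_alg_correct_sampling_alg:
  assumes "N > 0"
    and few_errors: "\<And>X. X \<in> dom_pf N f \<Longrightarrow>
      card {xs\<in>index_seqs N K. dec (count_ones X xs) \<noteq> the (f X)} \<le> real N ^ K / 3"
  shows "rand_alg_correct N f (sampling_alg dec N K)"
  unfolding rand_alg_correct_def
proof safe
  fix t assume "t \<in> set_pmf (sampling_alg dec N K)"
  thus "valid_tree N t"
    using finite_index_seqs index_seqs_nonempty[OF assms(1)]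
    by (auto simp: sampling_alg_def index_seqs_def intro: valid_count_tree)
next
  fix X assume X: "X \<in> dom_pf N f"
  define L Err where L_Err_def: "L = index_seqs N K" "Err = {xs\<in>L. dec (count_ones X xs) \<noteq> the (f X)}"
  have "finite L" "L \<noteq> {}" "card L = N ^ K"
    unfolding L_Err_def using finite_index_seqs index_seqs_nonempty[OF assms(1)] card_index_seqs by auto
  have "measure_pmf.prob (sampling_alg dec N K) {t. eval_tree t X = the (f X)}
      = card (L \<inter> {xs. dec (count_ones X xs) = the (f X)}) / card L"
    using \<open>finite L\<close> \<open>L \<noteq> {}\<close> by (simp add: sampling_alg_def eval_count_tree measure_pmf_of_set L_Err_def)
  also have "\<dots> = card (L - Err) / card L"
    by (rule arg_cong[where f = "\<lambda>A. real (card A) / card L"]) (auto simp: L_Err_def)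
  also have "\<dots> = 1 - card Err / card L"
    using \<open>finite L\<close> \<open>L \<noteq> {}\<close> by (simp add: L_Err_def card_Diff_subset of_nat_diff card_mono field_simps)
  moreover have "card Err / card L \<le> 1 / 3"
    using few_errors[OF X] \<open>card L = N ^ K\<close> \<open>finite L\<close> \<open>L \<noteq> {}\<close> unfolding L_Err_def
    by (simp add: divide_le_eq card_gt_0_iff)
  ultimately show "2/3 \<le> measure_pmf.prob (sampling_alg dec N K) {t. eval_tree t X = the (f X)}"
    by linarith
qed

definition nearest_value :: "nat \<Rightarrow> (bool list \<Rightarrow> bool option) \<Rightarrow> real \<Rightarrow> bool" where
  "nearest_value N f e \<longleftrightarrow>
     (\<exists>w1\<in>weights_of N f True. \<forall>w0\<in>weights_of N f False. \<bar>e - w1\<bar> < \<bar>e - w0\<bar>)"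

lemma nearest_value_eq:
  assumes "w \<in> weights_of N f v" "\<bar>e - w\<bar> < d / 2"
    and far: "\<And>w'. w' \<in> weights_of N f (\<not> v) \<Longrightarrow> d \<le> \<bar>real w - real w'\<bar>"
  shows "nearest_value N f e = v"
proof -
  have closer: "\<bar>e - w\<bar> < \<bar>e - w'\<bar>" "d / 2 < \<bar>e - w'\<bar>" if "w' \<in> weights_of N f (\<not> v)" for w'
    using far[OF that] assms(2) by linarith+
  show ?thesis
  proof (cases v)
    case True
    thus ?thesis using assms(1) closer unfolding nearest_value_def by auto
  next
    case False
    thus ?thesis using assms(1,2) closer unfolding nearest_value_def by force
  qed
qed

lemma chebyshev_sample_size_arith:
  fixes c M K N d w :: real
  assumes "K > 0" "N > 0" "d > 0" "M \<ge> 0"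
    and "c * (K * d / (2 * N))^2 \<le> M * K * (w / N) * (1 - w / N)"
    and "12 * (w * (N - w)) \<le> K * d^2"
  shows "c \<le> M / 3"
proof -
  have "c * (K^2 * d^2) \<le> 4 * (M * K * (w * (N - w)))"
    using assms(2,5) by (simp add: power_divide power_mult_distrib field_simps power2_eq_square)
  also have "\<dots> \<le> 4 * (M * K * (K * d^2 / 12))"
    using assms(1,4,6) by (intro mult_left_mono) (auto simp: field_simps)
  also have "\<dots> = (M / 3) * (K^2 * d^2)" by (simp add: power2_eq_square field_simps)
  finally show ?thesis using assms(1,3) by (simp add: mult_le_cancel_right_pos)
qed

lemma nearest_value_of_close_count:
  fixes K N :: nat and d :: real
  assumes "hamming_weight X \<in> weights_of N f v" "N > 0" "K > 0"
    and far: "\<And>w'. w' \<in> weights_of N f (\<not> v) \<Longrightarrow> d \<le> \<bar>real (hamming_weight X) - real w'\<bar>"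
    and close: "\<bar>real (count_ones X xs) - K * (hamming_weight X / N)\<bar> < K * d / (2 * N)"
  shows "nearest_value N f (N * count_ones X xs / K) = v"
proof (rule nearest_value_eq[OF assms(1) _ far])
  have "N * count_ones X xs / K - hamming_weight X
      = N / K * (real (count_ones X xs) - K * (hamming_weight X / N))"
    using assms(2,3) by (simp add: field_simps)
  hence "\<bar>N * count_ones X xs / K - hamming_weight X\<bar>
      = N / K * \<bar>real (count_ones X xs) - K * (hamming_weight X / N)\<bar>"
    by (simp add: abs_mult)
  also have "\<dots> < N / K * (K * d / (2 * N))"
    using close assms(2,3) by (intro mult_strict_left_mono) simp_all
  also have "\<dots> = d / 2" using assms(2,3) by (simp add: field_simps)
  finally show "\<bar>N * count_ones X xs / K - hamming_weight X\<bar> < d / 2" .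
qed

lemma card_nearest_value_errors_le:
  assumes "symmetric_pf N f" "length X = N" "f X = Some v" "N > 0" "K > 0"
    and sample_size: "\<And>w'. w' \<in> weights_of N f (\<not> v) \<Longrightarrow>
      12 * (hamming_weight X * (real N - hamming_weight X)) \<le> K * (real (hamming_weight X) - w')^2"
  shows "card {xs\<in>index_seqs N K. nearest_value N f (N * count_ones X xs / K) \<noteq> v} \<le> real N ^ K / 3"
proof -
  define w where "w = hamming_weight X"
  have w: "w \<in> weights_of N f v" using assms(2,3) unfolding w_def weights_of_def by auto
  show ?thesis
  proof (cases "weights_of N f (\<not> v) = {}")
    case True
    hence "nearest_value N f e = v" for e
      using w by (intro nearest_value_eq[where d = "2 * \<bar>e - w\<bar> + 1"]) auto
    thus ?thesis by simp
  next
    case False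
    define d where "d = Min ((\<lambda>w'. \<bar>real w - real w'\<bar>) ` weights_of N f (\<not> v))"
    have "finite (weights_of N f (\<not> v))"
      by (rule finite_subset[of _ "{..N}"]) (auto dest: weights_of_le)
    hence fin: "finite ((\<lambda>w'. \<bar>real w - real w'\<bar>) ` weights_of N f (\<not> v))" by simp
    obtain w'' where w'': "w'' \<in> weights_of N f (\<not> v)" "d = \<bar>real w - real w''\<bar>"
      using Min_in[OF fin] False unfolding d_def by auto
    have far: "d \<le> \<bar>real w - real w'\<bar>" if "w' \<in> weights_of N f (\<not> v)" for w'
      using Min_le[OF fin] that unfolding d_def by auto
    have "d > 0" using w'' w weights_of_disjoint[OF assms(1)] by fastforce
    define p r where "p = real w / N" and "r = K * d / (2 * N)"
    have "r > 0" using \<open>d > 0\<close> assms(4,5) unfolding r_def by simp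
    have "{xs\<in>index_seqs N K. nearest_value N f (N * count_ones X xs / K) \<noteq> v}
        \<subseteq> {xs\<in>index_seqs N K. r \<le> \<bar>real (count_ones X xs) - K * p\<bar>}"
      using nearest_value_of_close_count[OF w[unfolded w_def] assms(4,5) far[unfolded w_def]]
      unfolding r_def p_def w_def by (auto simp: not_le[symmetric])
    hence "card {xs\<in>index_seqs N K. nearest_value N f (N * count_ones X xs / K) \<noteq> v} * r^2
        \<le> card {xs\<in>index_seqs N K. r \<le> \<bar>real (count_ones X xs) - K * p\<bar>} * r^2"
      by (intro mult_right_mono of_nat_mono card_mono) (auto intro: finite_subset[OF _ finite_index_seqs])
    also have "\<dots> \<le> real N ^ K * K * p * (1 - p)"
      using card_abs_ge_mult_sq_le_sum_sq[OF finite_index_seqs[of N K] \<open>r > 0\<close>,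
          of "\<lambda>xs. real (count_ones X xs) - K * p"]
        sum_index_seqs_count_ones_deviation[OF assms(2,4), of K] unfolding p_def w_def by simp
    finally show ?thesis
      using chebyshev_sample_size_arith[of K N d "real N ^ K" _ w] assms(4,5) \<open>d > 0\<close>
        sample_size[OF w''(1)] w''(2) unfolding r_def p_def w_def by (simp add: power2_abs)
  qed
qed

lemma R_cplx_le_sample_size:
  fixes K :: nat
  assumes "symmetric_pf N f" "N > 0" "K > 0"
    and sample_size: "\<And>X v w'. length X = N \<Longrightarrow> f X = Some v \<Longrightarrow> w' \<in> weights_of N f (\<not> v) \<Longrightarrow>
      12 * (hamming_weight X * (real N - hamming_weight X)) \<le> K * (real (hamming_weight X) - w')^2"
  shows "R_cplx N f \<le> ennreal K"
proof -
  define dec where "dec c = nearest_value N f (N * c / K)" for c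
  have "rand_alg_correct N f (sampling_alg dec N K)"
  proof (rule rand_alg_correct_sampling_alg[OF assms(2)])
    fix X assume "X \<in> dom_pf N f"
    then obtain v where "length X = N" "f X = Some v" by (auto simp: dom_pf_def)
    thus "card {xs\<in>index_seqs N K. dec (count_ones X xs) \<noteq> the (f X)} \<le> real N ^ K / 3"
      unfolding dec_def using card_nearest_value_errors_le[OF assms(1) _ _ assms(2,3)] sample_size by simp
  qed
  thus ?thesis
    using R_cplx_le_rand_alg_cost rand_alg_cost_sampling_alg[OF assms(2)] order_trans by blast
qed

section \<open>Comparing the two bounds\<close>

lemma gap_ratio_bounds:
  assumes "w \<le> N" "w' \<le> N" "w \<noteq> w'"
  shows "1 \<le> gap_ratio N w w'" "w * (real N - w) \<le> gap_ratio N w w' * (real w - real w')^2"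
proof -
  define a b where a_b_def: "a = min w w'" "b = max w w'"
  have "a < b" "b \<le> N" using assms unfolding a_b_def by auto
  have sq: "(real w - real w')^2 = (real (b - a))^2"
    unfolding a_b_def by (cases "w \<le> w'") (auto simp: of_nat_diff power2_commute)
  have gap: "gap_ratio N w w' * (real w - real w')^2 = (N - a) * b"
    using \<open>a < b\<close> unfolding gap_ratio_def sq a_b_def[symmetric] by simp
  have "real ((b - a) * (b - a)) \<le> real ((N - a) * b)"
    using \<open>a < b\<close> \<open>b \<le> N\<close> by (intro of_nat_mono mult_mono) auto
  hence "(real w - real w')^2 \<le> real ((N - a) * b)"
    unfolding sq by (simp add: power2_eq_square)
  moreover have "(real w - real w')^2 > 0" using assms(3) by simp
  ultimately show "1 \<le> gap_ratio N w w'"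
    unfolding gap_ratio_def a_b_def[symmetric] by (simp add: le_divide_eq)
  have "real (w * (N - w)) \<le> real ((N - a) * b)"
    unfolding a_b_def using assms by (cases "w \<le> w'") (auto intro!: of_nat_mono mult_mono)
  thus "w * (real N - w) \<le> gap_ratio N w w' * (real w - real w')^2"
    unfolding gap using assms(1) by (simp add: of_nat_diff)
qed

lemma R_cplx_le_gap_ratio_bound:
  assumes "symmetric_pf N f" "G \<ge> 1"
    and "weights_of N f v \<noteq> {}" "weights_of N f (\<not> v) \<noteq> {}"
    and gap: "\<And>v w w'. w \<in> weights_of N f v \<Longrightarrow> w' \<in> weights_of N f (\<not> v) \<Longrightarrow> gap_ratio N w w' \<le> G"
  shows "R_cplx N f \<le> ennreal (13 * G)"
proof -
  define K where "K = nat \<lceil>12 * G\<rceil>"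
  have "real K = \<lceil>12 * G\<rceil>" unfolding K_def using assms(2) by simp
  hence K: "12 * G \<le> K" "K \<le> 13 * G" "K > 0"
    using ceiling_correct[of "12 * G"] assms(2) by linarith+
  obtain w1 w2 where "w1 \<in> weights_of N f v" "w2 \<in> weights_of N f (\<not> v)" using assms(3,4) by blast
  hence "w1 \<noteq> w2" "w1 \<le> N" "w2 \<le> N"
    using weights_of_disjoint[OF assms(1), of w1 v "\<not> v"] weights_of_le by auto
  hence "N > 0" by linarith
  have "R_cplx N f \<le> ennreal K"
  proof (rule R_cplx_le_sample_size[OF assms(1) \<open>N > 0\<close> K(3)])
    fix X v w' assume X: "length X = N" "f X = Some v" and w': "w' \<in> weights_of N f (\<not> v)"
    define w where "w = hamming_weight X"
    have w: "w \<in> weights_of N f v" using X unfolding w_def weights_of_def by auto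
    hence "w \<le> N" "w' \<le> N" "w \<noteq> w'"
      using w' weights_of_disjoint[OF assms(1), of w v "\<not> v"] weights_of_le by auto
    hence "w * (real N - w) \<le> gap_ratio N w w' * (real w - real w')^2"
      by (rule gap_ratio_bounds(2))
    also have "\<dots> \<le> G * (real w - real w')^2" using gap[OF w w'] by (rule mult_right_mono) simp
    finally have "12 * (w * (real N - w)) \<le> 12 * G * (real w - real w')^2" by simp
    also have "\<dots> \<le> K * (real w - real w')^2" using K(1) by (intro mult_right_mono) auto
    finally show "12 * (hamming_weight X * (real N - hamming_weight X)) \<le> K * (real (hamming_weight X) - w')^2"
      unfolding w_def .
  qed
  also have "\<dots> \<le> ennreal (13 * G)" using K(2) by (intro ennreal_leI) simp
  finally show ?thesis .
qed

lemma le_mult_Q_cplx_sq: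
  assumes "c > 0" and bound: "\<And>T. quantum_computes N f T \<Longrightarrow> x \<le> ennreal (c * (real T)^2)"
  shows "x \<le> ennreal c * (Q_cplx N f)^2"
proof (cases "\<exists>T. quantum_computes N f T")
  case False
  hence "Q_cplx N f = top" unfolding Q_cplx_def by simp
  thus ?thesis using assms(1) by (simp add: power2_eq_square ennreal_mult_top)
next
  case True
  define T0 where "T0 = (LEAST T. quantum_computes N f T)"
  have "quantum_computes N f T0" unfolding T0_def using True by (rule LeastI_ex)
  have "Q_cplx N f = ennreal T0"
    unfolding Q_cplx_def
  proof (rule antisym)
    show "(INF T\<in>{T. quantum_computes N f T}. ennreal T) \<le> ennreal T0"
      using \<open>quantum_computes N f T0\<close> by (intro INF_lower) simp
    show "ennreal T0 \<le> (INF T\<in>{T. quantum_computes N f T}. ennreal T)"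
      unfolding T0_def by (intro INF_greatest ennreal_leI) (simp add: Least_le)
  qed
  thus ?thesis using bound[OF \<open>quantum_computes N f T0\<close>] assms(1) by (simp add: ennreal_mult ennreal_power)
qed

theorem R_cplx_le_Q_cplx_sq:
  assumes "symmetric_pf N f"
  shows "R_cplx N f \<le> ennreal 16848 * (Q_cplx N f)^2"
proof (cases "\<exists>v. weights_of N f v \<noteq> {} \<and> weights_of N f (\<not> v) \<noteq> {}")
  case False
  hence "R_cplx N f = 0" using R_cplx_eq_0_if_weights_of_empty by blast
  thus ?thesis by simp
next
  case True
  then obtain v0 where v0: "weights_of N f v0 \<noteq> {}" "weights_of N f (\<not> v0) \<noteq> {}" by blast
  define P where "P = {(w, w'). \<exists>v. w \<in> weights_of N f v \<and> w' \<in> weights_of N f (\<not> v)}"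
  define G where "G = Max ((\<lambda>(w, w'). gap_ratio N w w') ` P)"
  have "finite P" by (rule finite_subset[of _ "{..N} \<times> {..N}"]) (auto simp: P_def dest: weights_of_le)
  have G_ge: "gap_ratio N w w' \<le> G" if "w \<in> weights_of N f v" "w' \<in> weights_of N f (\<not> v)" for v w w'
  proof -
    have "(w, w') \<in> P" using that unfolding P_def by blast
    hence "gap_ratio N w w' \<in> (\<lambda>(w, w'). gap_ratio N w w') ` P" by (rule image_eqI[rotated]) simp
    thus ?thesis unfolding G_def by (rule Max_ge[OF finite_imageI[OF \<open>finite P\<close>]])
  qed
  have "P \<noteq> {}" using v0 unfolding P_def by blast
  hence "G \<in> (\<lambda>(w, w'). gap_ratio N w w') ` P" unfolding G_def using \<open>finite P\<close> by (intro Max_in) simp_all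
  then obtain w0 w0' where "(w0, w0') \<in> P" "G = gap_ratio N w0 w0'" by auto
  then obtain v where w0: "w0 \<in> weights_of N f v" "w0' \<in> weights_of N f (\<not> v)" "G = gap_ratio N w0 w0'"
    unfolding P_def by blast
  have "w0 \<le> N" "w0' \<le> N" "w0 \<noteq> w0'"
    using w0 weights_of_disjoint[OF assms, of w0 v "\<not> v"] weights_of_le by auto
  hence "G \<ge> 1" using gap_ratio_bounds(1) w0(3) by simp
  have "R_cplx N f \<le> ennreal (16848 * (real T)^2)" if "quantum_computes N f T" for T
  proof -
    have "R_cplx N f \<le> ennreal (13 * G)"
      using R_cplx_le_gap_ratio_bound[OF assms \<open>G \<ge> 1\<close> v0] G_ge by blast
    also have "\<dots> \<le> ennreal (16848 * (real T)^2)"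
      using gap_ratio_le_queries[OF assms that w0(1,2)] w0(3) by (intro ennreal_leI) simp
    finally show ?thesis .
  qed
  thus ?thesis by (intro le_mult_Q_cplx_sq) simp_all
qed

theorem theorem27:
  shows "\<exists>C::real. C > 0 \<and>
    (\<forall>(N::nat) (f :: bool list \<Rightarrow> bool option).
       symmetric_pf N f \<longrightarrow> R_cplx N f \<le> ennreal C * (Q_cplx N f)^2)"
  using R_cplx_le_Q_cplx_sq by (intro exI[of _ 16848]) simp

end
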